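(* Let $Z=\{Z_t:t\ge0\}$ be a continuous fractional Brownian motion with Hurst parameter $H\in(0,1)$. For $\alpha>0$ put $a_t:=H\,\mathrm{e}^{\alpha t/H}/\alpha$ and define $$Y^{(\alpha)}_t:=\int_0^t \mathrm{e}^{-\alpha s}\,dZ_{a_s}=\mathrm{e}^{-\alpha t}Z_{a_t}-Z_{a_0}+\alpha\int_0^t\mathrm{e}^{-\alpha s}Z_{a_s}\,ds,\quad t\ge0,$$ the integral being a pathwise Riemann–Stieltjes integral. Then for all $\alpha>0$, $$\{\alpha^H Y^{(\alpha)}_{t/\alpha}:t\ge0\}\overset{d}{=}\{Y^{(1)}_t:t\ge0\},$$ where $\overset{d}{=}$ denotes equality in law (with $Y^{(1)}$ the process obtained with $\alpha=1$). Moreover, the process $Y^{(\alpha)}$ has stationary increments.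
   Context: A fractional Brownian motion with Hurst parameter $H\in(0,1)$ is a centered Gaussian process $Z$ on $[0,\infty)$ with covariance $\mathbf{E}(Z_tZ_s)=\frac12(t^{2H}+s^{2H}-|t-s|^{2H})$; a continuous version is taken. *)

theory Defs
  imports "HOL-Probability.Probability"
begin

definition fbm_cov :: "real \<Rightarrow> real \<Rightarrow> real \<Rightarrow> real" where
  "fbm_cov H t s = (t powr (2*H) + s powr (2*H) - \<bar>t - s\<bar> powr (2*H)) / 2"

text \<open>Z is a continuous fractional Brownian motion on the probability space M:
  each Z t is a real random variable, every finite linear combination
  sum_i c_i Z(t_i) (t_i \<ge> 0) is a centered Gaussian with variance
  sum_i sum_j c_i c_j fbm_cov H t_i t_j (expressed through its characteristic
  function, which also covers the degenerate case), and all sample paths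
  are continuous on [0,\<infinity>).\<close>
definition is_fbm :: "'w measure \<Rightarrow> real \<Rightarrow> (real \<Rightarrow> 'w \<Rightarrow> real) \<Rightarrow> bool" where
  "is_fbm M H Z \<longleftrightarrow>
     prob_space M \<and>
     (\<forall>t\<ge>0. Z t \<in> borel_measurable M) \<and>
     (\<forall>(ts::real list) (cs::real list) (u::real).
        length ts = length cs \<and> (\<forall>t\<in>set ts. 0 \<le> t) \<longrightarrow>
        char (distr M borel (\<lambda>\<omega>. \<Sum>i<length ts. cs!i * Z (ts!i) \<omega>)) u =
        complex_of_real (exp (- (\<Sum>i<length ts. \<Sum>j<length ts.
              cs!i * cs!j * fbm_cov H (ts!i) (ts!j)) * u^2 / 2))) \<and>
     (\<forall>\<omega>\<in>space M. continuous_on {0..} (\<lambda>t. Z t \<omega>))"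

definition time_change :: "real \<Rightarrow> real \<Rightarrow> real \<Rightarrow> real" where
  "time_change H \<alpha> t = H * exp (\<alpha> * t / H) / \<alpha>"

definition Yproc :: "real \<Rightarrow> (real \<Rightarrow> 'w \<Rightarrow> real) \<Rightarrow> real \<Rightarrow> real \<Rightarrow> 'w \<Rightarrow> real" where
  "Yproc H Z \<alpha> t \<omega> =
     exp (- \<alpha> * t) * Z (time_change H \<alpha> t) \<omega> - Z (time_change H \<alpha> 0) \<omega>
     + \<alpha> * integral {0..t} (\<lambda>s. exp (- \<alpha> * s) * Z (time_change H \<alpha> s) \<omega>)"

definition equal_law :: "'w measure \<Rightarrow> real set \<Rightarrow> (real \<Rightarrow> 'w \<Rightarrow> real) \<Rightarrow> (real \<Rightarrow> 'w \<Rightarrow> real) \<Rightarrow> bool" where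
  "equal_law M T X Y \<longleftrightarrow>
     distr M (PiM T (\<lambda>_. borel)) (\<lambda>\<omega>. \<lambda>t\<in>T. X t \<omega>) =
     distr M (PiM T (\<lambda>_. borel)) (\<lambda>\<omega>. \<lambda>t\<in>T. Y t \<omega>)"

definition stationary_increments :: "'w measure \<Rightarrow> (real \<Rightarrow> 'w \<Rightarrow> real) \<Rightarrow> bool" where
  "stationary_increments M X \<longleftrightarrow>
     (\<forall>h\<ge>0. equal_law M {0..} (\<lambda>t \<omega>. X (t + h) \<omega> - X h \<omega>) (\<lambda>t \<omega>. X t \<omega> - X 0 \<omega>))"

end

theory Submission
  imports Defs
begin

text \<open>
  \<open>Yproc H Z \<alpha>\<close> is a pathwise functional of \<open>Z\<close> which, on continuous paths, is the pointwise
  limit of finite linear combinations of path values (the two boundary terms plus Riemann sums of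
  the integral). The laws of such linear combinations are fixed by the fBm covariance, so by
  dominated convergence the finite-dimensional joint characteristic functions of \<open>Yproc H Z \<alpha>\<close>
  are the same for any two fBms with the same \<open>H\<close>; uniqueness of multivariate characteristic
  functions (via trigonometric approximation of indicators of boxes) then gives equality in law.
  Both claims follow from self-similarity, \<open>c powr -H * Z (c * t)\<close> being again an fBm: since
  \<open>time_change H \<alpha> (t / \<alpha>) = time_change H 1 t / \<alpha>\<close> and
  \<open>time_change H \<alpha> (s + h) = exp (\<alpha> * h / H) * time_change H \<alpha> s\<close>, both the rescaled process and
  the increments \<open>Y(t + h) - Y(h)\<close> are the same functional evaluated on a rescaled fBm.
\<close>

definition joint_char :: "'w measure \<Rightarrow> 'i set \<Rightarrow> ('i \<Rightarrow> 'w \<Rightarrow> real) \<Rightarrow> ('i \<Rightarrow> real) \<Rightarrow> complex" where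
  "joint_char M J X u = (CLINT \<omega>|M. iexp (\<Sum>j\<in>J. u j * X j \<omega>))"

inductive trig_poly :: "'i set \<Rightarrow> (('i \<Rightarrow> real) \<Rightarrow> complex) \<Rightarrow> bool" for J where
  trig_poly_iexp: "trig_poly J (\<lambda>x. c * iexp (\<Sum>j\<in>J. u j * x j))"
| trig_poly_add: "trig_poly J f \<Longrightarrow> trig_poly J g \<Longrightarrow> trig_poly J (\<lambda>x. f x + g x)"

lemma iexp_add: "iexp (a + b) = iexp a * iexp b"
  by (simp add: distrib_left exp_add)

lemma trig_poly_mult:
  fixes J :: "'i set"
  assumes "trig_poly J f" "trig_poly J g"
  shows "trig_poly J (\<lambda>x. f x * g x)"
  using assms
proof (induction arbitrary: g)
  case (trig_poly_iexp c u)
  from trig_poly_iexp.prems show ?case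
  proof induction
    case (trig_poly_iexp d v)
    have e: "iexp (\<Sum>j\<in>J. (u j + v j) * x j) = iexp (\<Sum>j\<in>J. u j * x j) * iexp (\<Sum>j\<in>J. v j * x j)"
      for x :: "'i \<Rightarrow> real"
      by (simp only: distrib_right sum.distrib iexp_add)
    have "trig_poly J (\<lambda>x. (c * d) * iexp (\<Sum>j\<in>J. (u j + v j) * x j))"
      by (rule trig_poly.trig_poly_iexp)
    then show ?case
      unfolding e by (simp add: mult_ac)
  next
    case (trig_poly_add f g)
    then show ?case
      using trig_poly.trig_poly_add by (fastforce simp: distrib_left)
  qed
next
  case (trig_poly_add f1 f2)
  then show ?case
    using trig_poly.trig_poly_add by (fastforce simp: distrib_right)
qed

lemma trig_poly_const: "trig_poly J (\<lambda>x. c)"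
  using trig_poly_iexp[of J c "\<lambda>_. 0"] by simp

lemma trig_poly_cmult: "trig_poly J f \<Longrightarrow> trig_poly J (\<lambda>x. c * f x)"
  by (rule trig_poly_mult[OF trig_poly_const])

lemma trig_poly_power: "trig_poly J f \<Longrightarrow> trig_poly J (\<lambda>x. f x ^ n)"
  by (induction n) (simp_all add: trig_poly_const trig_poly_mult)

lemma trig_poly_sum:
  "finite K \<Longrightarrow> (\<And>k. k \<in> K \<Longrightarrow> trig_poly J (F k)) \<Longrightarrow> trig_poly J (\<lambda>x. \<Sum>k\<in>K. F k x)"
  by (induction K rule: finite_induct) (simp_all add: trig_poly_const trig_poly_add)

lemma trig_poly_prod:
  "finite K \<Longrightarrow> (\<And>k. k \<in> K \<Longrightarrow> trig_poly J (F k)) \<Longrightarrow> trig_poly J (\<lambda>x. \<Prod>k\<in>K. F k x)"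
  by (induction K rule: finite_induct) (simp_all add: trig_poly_const trig_poly_mult)

lemma trig_poly_bounded: "trig_poly J f \<Longrightarrow> \<exists>B. \<forall>x. cmod (f x) \<le> B"
proof (induction rule: trig_poly.induct)
  case (trig_poly_iexp c u)
  then show ?case by (auto simp: norm_mult norm_exp_i_times)
next
  case (trig_poly_add f g)
  then obtain B1 B2 where "\<forall>x. cmod (f x) \<le> B1" "\<forall>x. cmod (g x) \<le> B2" by auto
  then have "\<forall>x. cmod (f x + g x) \<le> B1 + B2"
    by (meson add_mono norm_triangle_ineq order_trans)
  then show ?case by blast
qed

lemma trig_poly_coord_iexp:
  fixes J :: "'i set"
  assumes "finite J" "j \<in> J"
  shows "trig_poly J (\<lambda>x. c * iexp (v * x j))"
proof -
  have "(\<Sum>i\<in>J. (if i = j then v else 0) * x i) = (\<Sum>i\<in>J. if i = j then v * x j else 0)"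
    for x :: "'i \<Rightarrow> real"
    by (rule sum.cong) auto
  then have "(\<Sum>i\<in>J. (if i = j then v else 0) * x i) = v * x j" for x :: "'i \<Rightarrow> real"
    using assms by simp
  then show ?thesis
    using trig_poly_iexp[of J c "\<lambda>i. if i = j then v else 0"] by simp
qed

lemma trig_poly_coord_cos:
  assumes "finite J" "j \<in> J"
  shows "trig_poly J (\<lambda>x. complex_of_real (cos (a * x j + b)))"
proof -
  have "complex_of_real (cos (a * y + b)) =
     iexp b / 2 * iexp (a * y) + iexp (- b) / 2 * iexp ((- a) * y)" for y
  proof -
    have "complex_of_real (cos (a * y + b)) = (iexp (a * y + b) + iexp (- (a * y + b))) / 2"
      by (simp only: cos_of_real[symmetric] cos_exp_eq of_real_minus mult_minus_right)
    also have "iexp (a * y + b) = iexp b * iexp (a * y)"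
      by (simp only: iexp_add mult.commute add.commute)
    also have "iexp (- (a * y + b)) = iexp (- b) * iexp ((- a) * y)"
      by (metis iexp_add minus_add_distrib mult_minus_left add.commute)
    finally show ?thesis by (simp add: field_simps)
  qed
  moreover have "trig_poly J (\<lambda>x. iexp b / 2 * iexp (a * x j) + iexp (- b) / 2 * iexp ((- a) * x j))"
    using assms by (intro trig_poly_add trig_poly_coord_iexp)
  ultimately show ?thesis by simp
qed

lemma trig_poly_measurable:
  assumes "trig_poly J f" "\<And>j. j \<in> J \<Longrightarrow> X j \<in> borel_measurable M"
  shows "(\<lambda>\<omega>. f (\<lambda>j. X j \<omega>)) \<in> borel_measurable M"
  using assms(1)
proof induction
  case (trig_poly_iexp c u)
  have [measurable]: "(\<lambda>\<omega>. \<Sum>j\<in>J. u j * X j \<omega>) \<in> borel_measurable M"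
    using assms(2) by (intro borel_measurable_sum borel_measurable_times borel_measurable_const)
  show ?case by measurable
qed simp

lemma trig_poly_integrable:
  assumes "finite_measure M" "trig_poly J f" "\<And>j. j \<in> J \<Longrightarrow> X j \<in> borel_measurable M"
  shows "integrable M (\<lambda>\<omega>. f (\<lambda>j. X j \<omega>))"
proof -
  obtain B where "\<And>x. cmod (f x) \<le> B"
    using trig_poly_bounded[OF assms(2)] by auto
  then show ?thesis
    by (intro finite_measure.integrable_const_bound[OF assms(1), where B=B])
       (auto intro: trig_poly_measurable[OF assms(2,3)])
qed

lemma trig_poly_integral_eq_if_joint_char_eq:
  assumes "finite_measure M"
    and "\<And>j. j \<in> J \<Longrightarrow> X1 j \<in> borel_measurable M" "\<And>j. j \<in> J \<Longrightarrow> X2 j \<in> borel_measurable M"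
    and "joint_char M J X1 = joint_char M J X2"
    and "trig_poly J f"
  shows "(CLINT \<omega>|M. f (\<lambda>j. X1 j \<omega>)) = (CLINT \<omega>|M. f (\<lambda>j. X2 j \<omega>))"
  using assms(5)
proof induction
  case (trig_poly_iexp c u)
  then show ?case
    using fun_cong[OF assms(4), of u] by (simp add: joint_char_def)
next
  case (trig_poly_add f g)
  have "(CLINT \<omega>|M. f (\<lambda>j. X \<omega> j) + g (\<lambda>j. X \<omega> j)) =
      (CLINT \<omega>|M. f (\<lambda>j. X \<omega> j)) + (CLINT \<omega>|M. g (\<lambda>j. X \<omega> j))"
    if "\<And>j. j \<in> J \<Longrightarrow> (\<lambda>\<omega>. X \<omega> j) \<in> borel_measurable M" for X
    using trig_poly_integrable[OF assms(1) trig_poly_add.hyps(1) that]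
      trig_poly_integrable[OF assms(1) trig_poly_add.hyps(2) that]
    by (rule Bochner_Integration.integral_add)
  from this[of "\<lambda>\<omega> j. X1 j \<omega>"] this[of "\<lambda>\<omega> j. X2 j \<omega>"] show ?case
    using trig_poly_add.IH assms(2,3) by simp
qed

lemma trig_poly_Bernstein_cos:
  fixes J :: "'i set"
  assumes "finite J" "j \<in> J"
  shows "trig_poly J (\<lambda>x. complex_of_real (\<Sum>k\<le>N. w k * Bernstein N k ((1 + cos (a * x j + b)) / 2)))"
proof -
  define p where "p x = complex_of_real ((1 + cos (a * x j + b)) / 2)" for x :: "'i \<Rightarrow> real"
  have "trig_poly J (\<lambda>x. 1/2 + 1/2 * complex_of_real (cos (a * x j + b)))"
    using assms by (intro trig_poly_add trig_poly_const trig_poly_cmult trig_poly_coord_cos)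
  then have p: "trig_poly J p"
    by (simp add: p_def[abs_def] add_divide_distrib)
  have "trig_poly J (\<lambda>x. 1 - p x)"
    using trig_poly_add[OF trig_poly_const[of J 1] trig_poly_cmult[OF p, of "-1"]] by simp
  with p have "trig_poly J (\<lambda>x. \<Sum>k\<le>N. complex_of_real (w k) *
      (of_nat (N choose k) * p x ^ k * (1 - p x) ^ (N - k)))"
    by (intro trig_poly_sum trig_poly_cmult trig_poly_mult trig_poly_power) simp_all
  then show ?thesis
    by (simp add: p_def Bernstein_def)
qed

text \<open>Bernstein approximation after the substitution \<open>x = (1 + cos \<theta>) / 2\<close>, where \<open>\<theta>\<close> maps
  \<open>[-L, L]\<close> linearly onto \<open>[0, pi]\<close>, so that \<open>x\<close> runs through \<open>[0, 1]\<close> exactly once.\<close>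

lemma trig_poly_approx:
  fixes h :: "real \<Rightarrow> real"
  assumes "finite J" "j \<in> J"
    and h: "continuous_on UNIV h" "\<And>y. \<bar>h y\<bar> \<le> 1"
    and L: "0 < L" and e: "0 < e" "e \<le> 1"
  obtains q where "trig_poly J (\<lambda>x. complex_of_real (q (x j)))" "continuous_on UNIV q"
    "\<And>y. \<bar>q y\<bar> \<le> 2" "\<And>y. \<bar>y\<bar> \<le> L \<Longrightarrow> \<bar>q y - h y\<bar> < e"
proof -
  define \<phi> where "\<phi> x = h (2 * L / pi * arccos (2 * x - 1) - L)" for x
  have "continuous_on {0..1} \<phi>"
    unfolding \<phi>_def
    by (rule continuous_on_compose2[OF h(1)]) (auto intro!: continuous_intros continuous_on_arccos)
  then obtain N where N: "\<And>x. x \<in> {0..1} \<Longrightarrow> \<bar>\<phi> x - (\<Sum>k\<le>N. \<phi> (k/N) * Bernstein N k x)\<bar> < e"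
    using Bernstein_Weierstrass[OF _ e(1)] by blast
  define \<theta> where "\<theta> y = pi / (2 * L) * y + pi / 2" for y
  define p where "p y = (1 + cos (\<theta> y)) / 2" for y
  define q where "q y = (\<Sum>k\<le>N. \<phi> (k/N) * Bernstein N k (p y))" for y
  have p01: "p y \<in> {0..1}" for y
    unfolding p_def by simp (smt (verit) cos_ge_minus_one)
  have "\<phi> (p y) = h y" if "\<bar>y\<bar> \<le> L" for y
  proof -
    have \<theta>: "\<theta> y = pi * (y + L) / (2 * L)"
      using L by (simp add: \<theta>_def field_simps)
    have "0 \<le> \<theta> y"
      using that L unfolding \<theta> by (intro divide_nonneg_pos mult_nonneg_nonneg) auto
    moreover have "\<theta> y \<le> pi"
      using that L unfolding \<theta> by (simp add: field_simps)
    moreover have "2 * p y - 1 = cos (\<theta> y)"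
      by (simp add: p_def field_simps)
    ultimately have "arccos (2 * p y - 1) = \<theta> y"
      by (simp add: arccos_cos)
    then show ?thesis
      using L by (simp add: \<phi>_def \<theta>_def field_simps)
  qed
  then have "\<bar>q y - h y\<bar> < e" if "\<bar>y\<bar> \<le> L" for y
    using N[OF p01, of y] that by (simp add: q_def abs_minus_commute)
  moreover have "\<bar>q y\<bar> \<le> 2" for y
    using N[OF p01, of y] h(2)[of "2 * L / pi * arccos (2 * p y - 1) - L"] e(2)
    unfolding q_def \<phi>_def by linarith
  moreover have "continuous_on UNIV q"
    unfolding q_def p_def \<theta>_def Bernstein_def by (intro continuous_intros) auto
  moreover have "trig_poly J (\<lambda>x. complex_of_real (q (x j)))"
    using trig_poly_Bernstein_cos[OF assms(1,2), where N = N and w = "\<lambda>k. \<phi> (k/N)"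
        and a = "pi / (2 * L)" and b = "pi / 2"]
    by (simp add: q_def p_def \<theta>_def)
  ultimately show ?thesis using that by blast
qed

lemma integral_prod_tendsto:
  fixes F :: "nat \<Rightarrow> 'i \<Rightarrow> real \<Rightarrow> real"
  assumes M: "finite_measure M"
    and X: "\<And>j. j \<in> J \<Longrightarrow> X j \<in> borel_measurable M"
    and F: "\<And>n j. j \<in> J \<Longrightarrow> F n j \<in> borel_measurable borel" "\<And>n j y. j \<in> J \<Longrightarrow> \<bar>F n j y\<bar> \<le> B"
    and G: "\<And>j. j \<in> J \<Longrightarrow> G j \<in> borel_measurable borel"
    and lim: "\<And>j y. j \<in> J \<Longrightarrow> (\<lambda>n. F n j y) \<longlonglongrightarrow> G j y"
  shows "(\<lambda>n. LINT \<omega>|M. (\<Prod>j\<in>J. F n j (X j \<omega>))) \<longlonglongrightarrow> (LINT \<omega>|M. (\<Prod>j\<in>J. G j (X j \<omega>)))"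
proof (rule integral_dominated_convergence[where w="\<lambda>_. B ^ card J"])
  show "(\<lambda>\<omega>. \<Prod>j\<in>J. G j (X j \<omega>)) \<in> borel_measurable M"
    using measurable_compose[OF X G] by (rule borel_measurable_prod)
  show "(\<lambda>\<omega>. \<Prod>j\<in>J. F n j (X j \<omega>)) \<in> borel_measurable M" for n
    using measurable_compose[OF X F(1)] by (rule borel_measurable_prod)
  show "integrable M (\<lambda>_. B ^ card J)"
    using M by (simp add: finite_measure.integrable_const)
  show "AE \<omega> in M. (\<lambda>n. \<Prod>j\<in>J. F n j (X j \<omega>)) \<longlonglongrightarrow> (\<Prod>j\<in>J. G j (X j \<omega>))"
    using lim by (intro AE_I2 tendsto_prod) auto
  have "\<bar>\<Prod>j\<in>J. F n j (X j \<omega>)\<bar> \<le> B ^ card J" for n \<omega>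
  proof -
    have "(\<Prod>j\<in>J. \<bar>F n j (X j \<omega>)\<bar>) \<le> (\<Prod>j\<in>J. B)"
      using F(2) by (intro prod_mono) auto
    then show ?thesis by (simp add: abs_prod)
  qed
  then show "AE \<omega> in M. norm (\<Prod>j\<in>J. F n j (X j \<omega>)) \<le> B ^ card J" for n
    by simp
qed

lemma trig_poly_approx_seq:
  fixes h :: "'i \<Rightarrow> real \<Rightarrow> real"
  assumes J: "finite J"
    and h: "\<And>j. j \<in> J \<Longrightarrow> continuous_on UNIV (h j)" "\<And>j y. j \<in> J \<Longrightarrow> \<bar>h j y\<bar> \<le> 1"
  obtains Q where "\<And>n j. j \<in> J \<Longrightarrow> trig_poly J (\<lambda>x. complex_of_real (Q n j (x j)))"
    "\<And>n j. j \<in> J \<Longrightarrow> continuous_on UNIV (Q n j)" "\<And>n j y. j \<in> J \<Longrightarrow> \<bar>Q n j y\<bar> \<le> 2"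
    "\<And>j y. j \<in> J \<Longrightarrow> (\<lambda>n. Q n j y) \<longlonglongrightarrow> h j y"
proof -
  have "\<forall>n. \<forall>j\<in>J. \<exists>q. trig_poly J (\<lambda>x. complex_of_real (q (x j))) \<and> continuous_on UNIV q \<and>
      (\<forall>y. \<bar>q y\<bar> \<le> 2) \<and> (\<forall>y. \<bar>y\<bar> \<le> real (Suc n) \<longrightarrow> \<bar>q y - h j y\<bar> < inverse (real (Suc n)))"
  proof (intro allI ballI)
    fix n j assume j: "j \<in> J"
    have "0 < real (Suc n)" "0 < inverse (real (Suc n))" "inverse (real (Suc n)) \<le> 1"
      by (simp_all add: inverse_le_1_iff)
    then show "\<exists>q. trig_poly J (\<lambda>x. complex_of_real (q (x j))) \<and> continuous_on UNIV q \<and>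
      (\<forall>y. \<bar>q y\<bar> \<le> 2) \<and> (\<forall>y. \<bar>y\<bar> \<le> real (Suc n) \<longrightarrow> \<bar>q y - h j y\<bar> < inverse (real (Suc n)))"
      by (rule trig_poly_approx[OF J j h(1)[OF j] h(2)[OF j]]) blast
  qed
  then have "\<forall>n. \<exists>q. \<forall>j\<in>J. trig_poly J (\<lambda>x. complex_of_real (q j (x j))) \<and> continuous_on UNIV (q j) \<and>
      (\<forall>y. \<bar>q j y\<bar> \<le> 2) \<and> (\<forall>y. \<bar>y\<bar> \<le> real (Suc n) \<longrightarrow> \<bar>q j y - h j y\<bar> < inverse (real (Suc n)))"
    by (intro allI bchoice) blast
  then obtain Q where "\<forall>n. \<forall>j\<in>J. trig_poly J (\<lambda>x. complex_of_real (Q n j (x j))) \<and>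
      continuous_on UNIV (Q n j) \<and> (\<forall>y. \<bar>Q n j y\<bar> \<le> 2) \<and>
      (\<forall>y. \<bar>y\<bar> \<le> real (Suc n) \<longrightarrow> \<bar>Q n j y - h j y\<bar> < inverse (real (Suc n)))"
    by (auto dest!: choice)
  then have Q: "\<And>n j. j \<in> J \<Longrightarrow> trig_poly J (\<lambda>x. complex_of_real (Q n j (x j)))"
    "\<And>n j. j \<in> J \<Longrightarrow> continuous_on UNIV (Q n j)" "\<And>n j y. j \<in> J \<Longrightarrow> \<bar>Q n j y\<bar> \<le> 2"
    "\<And>n j y. j \<in> J \<Longrightarrow> \<bar>y\<bar> \<le> real (Suc n) \<Longrightarrow> \<bar>Q n j y - h j y\<bar> < inverse (real (Suc n))"
    by blast+
  moreover have "(\<lambda>n. Q n j y) \<longlonglongrightarrow> h j y" if j: "j \<in> J" for j y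
  proof (rule Lim_transform[OF tendsto_const], rule Lim_null_comparison[OF _ LIMSEQ_inverse_real_of_nat])
    obtain N :: nat where "\<bar>y\<bar> \<le> real N"
      using real_arch_simple by blast
    then have "\<forall>n\<ge>N. norm (Q n j y - h j y) \<le> inverse (real (Suc n))"
      using Q(4)[OF j] by (simp add: less_imp_le)
    then show "\<forall>\<^sub>F n in sequentially. norm (Q n j y - h j y) \<le> inverse (real (Suc n))"
      using eventually_sequentially by blast
  qed
  ultimately show ?thesis
    using that by blast
qed

lemma integral_prod_eq_if_joint_char_eq:
  fixes h :: "'i \<Rightarrow> real \<Rightarrow> real"
  assumes M: "prob_space M" and J: "finite J"
    and X1: "\<And>j. j \<in> J \<Longrightarrow> X1 j \<in> borel_measurable M"
    and X2: "\<And>j. j \<in> J \<Longrightarrow> X2 j \<in> borel_measurable M"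
    and char: "joint_char M J X1 = joint_char M J X2"
    and h: "\<And>j. j \<in> J \<Longrightarrow> continuous_on UNIV (h j)" "\<And>j y. j \<in> J \<Longrightarrow> \<bar>h j y\<bar> \<le> 1"
  shows "(LINT \<omega>|M. (\<Prod>j\<in>J. h j (X1 j \<omega>))) = (LINT \<omega>|M. (\<Prod>j\<in>J. h j (X2 j \<omega>)))"
proof -
  have fin: "finite_measure M"
    using M by (rule prob_space.finite_measure)
  obtain Q where Q: "\<And>n j. j \<in> J \<Longrightarrow> trig_poly J (\<lambda>x. complex_of_real (Q n j (x j)))"
    "\<And>n j. j \<in> J \<Longrightarrow> continuous_on UNIV (Q n j)" "\<And>n j y. j \<in> J \<Longrightarrow> \<bar>Q n j y\<bar> \<le> 2"
    and Q_tendsto: "\<And>j y. j \<in> J \<Longrightarrow> (\<lambda>n. Q n j y) \<longlonglongrightarrow> h j y"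
    using trig_poly_approx_seq[where h = h, OF J] h by blast
  have lim: "(\<lambda>n. LINT \<omega>|M. (\<Prod>j\<in>J. Q n j (X j \<omega>))) \<longlonglongrightarrow> (LINT \<omega>|M. (\<Prod>j\<in>J. h j (X j \<omega>)))"
    if "\<And>j. j \<in> J \<Longrightarrow> X j \<in> borel_measurable M" for X
    using fin that Q(2,3) h(1) Q_tendsto
    by (intro integral_prod_tendsto) (auto intro: borel_measurable_continuous_onI)
  have "(LINT \<omega>|M. (\<Prod>j\<in>J. Q n j (X1 j \<omega>))) = (LINT \<omega>|M. (\<Prod>j\<in>J. Q n j (X2 j \<omega>)))" for n
  proof -
    have "trig_poly J (\<lambda>x. \<Prod>j\<in>J. complex_of_real (Q n j (x j)))"
      using J Q(1) by (rule trig_poly_prod)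
    from trig_poly_integral_eq_if_joint_char_eq[OF fin X1 X2 char this]
    show ?thesis
      by (simp add: of_real_prod[symmetric] integral_complex_of_real del: of_real_prod)
  qed
  then show ?thesis
    using LIMSEQ_unique[OF lim[OF X1]] lim[OF X2] by simp
qed

definition ramp :: "real \<Rightarrow> real \<Rightarrow> nat \<Rightarrow> real \<Rightarrow> real" where
  "ramp a b n y = max 0 (min 1 (real n * min (y - a) (b - y)))"

lemma continuous_on_ramp: "continuous_on UNIV (ramp a b n)"
  unfolding ramp_def by (intro continuous_intros)

lemma abs_ramp_le: "\<bar>ramp a b n y\<bar> \<le> 1"
  unfolding ramp_def by auto

lemma ramp_tendsto_indicator: "(\<lambda>n. ramp a b n y) \<longlonglongrightarrow> indicator {a<..<b} y"
proof (cases "a < y \<and> y < b")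
  case True
  define m where "m = min (y - a) (b - y)"
  have m: "0 < m"
    using True by (simp add: m_def)
  obtain N :: nat where N: "1 / m \<le> real N"
    using real_arch_simple by blast
  have "ramp a b n y = 1" if "N \<le> n" for n
  proof -
    have "1 / m \<le> real n"
      using N that by linarith
    then have "1 \<le> real n * m"
      using m by (simp add: pos_divide_le_eq)
    then show ?thesis
      by (simp add: ramp_def m_def[symmetric])
  qed
  then show ?thesis
    using True by (intro tendsto_eventually) (auto simp: eventually_sequentially)
next
  case False
  then have "min (y - a) (b - y) \<le> 0"
    by auto
  then have "real n * min (y - a) (b - y) \<le> 0" for n
    by (simp add: mult_nonneg_nonpos)
  then have "ramp a b n y = 0" for n
    unfolding ramp_def by (metis max.absorb1 min.coboundedI2 min_def)
  then show ?thesis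
    using False by simp
qed

lemma emeasure_box_eq_if_joint_char_eq:
  assumes M: "prob_space M" and J: "finite J"
    and X1: "\<And>j. j \<in> J \<Longrightarrow> X1 j \<in> borel_measurable M"
    and X2: "\<And>j. j \<in> J \<Longrightarrow> X2 j \<in> borel_measurable M"
    and char: "joint_char M J X1 = joint_char M J X2"
  shows "emeasure M {\<omega>\<in>space M. \<forall>j\<in>J. X1 j \<omega> \<in> {a j<..<b j}} =
         emeasure M {\<omega>\<in>space M. \<forall>j\<in>J. X2 j \<omega> \<in> {a j<..<b j}}"
proof -
  interpret prob_space M by fact
  have box: "(LINT \<omega>|M. (\<Prod>j\<in>J. indicator {a j<..<b j} (X j \<omega>))) =
      measure M {\<omega>\<in>space M. \<forall>j\<in>J. X j \<omega> \<in> {a j<..<b j}}" for X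
  proof -
    have "(\<Prod>j\<in>J. indicator {a j<..<b j} (X j \<omega>)) =
        (indicator {\<omega>\<in>space M. \<forall>j\<in>J. X j \<omega> \<in> {a j<..<b j}} \<omega> :: real)"
      if "\<omega> \<in> space M" for \<omega>
    proof (cases "\<forall>j\<in>J. X j \<omega> \<in> {a j<..<b j}")
      case False
      then obtain j where "j \<in> J" "X j \<omega> \<notin> {a j<..<b j}"
        by blast
      then show ?thesis
        using False by (auto simp: prod_zero_iff[OF J] intro!: bexI[of _ j])
    qed (simp add: that)
    then have "(LINT \<omega>|M. (\<Prod>j\<in>J. indicator {a j<..<b j} (X j \<omega>))) =
        (LINT \<omega>|M. indicator {\<omega>\<in>space M. \<forall>j\<in>J. X j \<omega> \<in> {a j<..<b j}} \<omega> :: real)"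
      by (intro Bochner_Integration.integral_cong refl)
    then show ?thesis
      by (simp add: Int_absorb2)
  qed
  have lim: "(\<lambda>n. LINT \<omega>|M. (\<Prod>j\<in>J. ramp (a j) (b j) n (X j \<omega>))) \<longlonglongrightarrow>
      measure M {\<omega>\<in>space M. \<forall>j\<in>J. X j \<omega> \<in> {a j<..<b j}}"
    if "\<And>j. j \<in> J \<Longrightarrow> X j \<in> borel_measurable M" for X
    unfolding box[symmetric]
    by (rule integral_prod_tendsto[where B=1, OF finite_measure that])
       (auto intro: borel_measurable_continuous_onI continuous_on_ramp abs_ramp_le ramp_tendsto_indicator)
  have "(LINT \<omega>|M. (\<Prod>j\<in>J. ramp (a j) (b j) n (X1 j \<omega>))) = (LINT \<omega>|M. (\<Prod>j\<in>J. ramp (a j) (b j) n (X2 j \<omega>)))"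
    for n
    by (rule integral_prod_eq_if_joint_char_eq[OF M J X1 X2 char continuous_on_ramp abs_ramp_le])
  then have "measure M {\<omega>\<in>space M. \<forall>j\<in>J. X1 j \<omega> \<in> {a j<..<b j}} =
      measure M {\<omega>\<in>space M. \<forall>j\<in>J. X2 j \<omega> \<in> {a j<..<b j}}"
    using LIMSEQ_unique[OF lim[OF X1]] lim[OF X2] by simp
  then show ?thesis
    by (simp add: emeasure_eq_measure)
qed

definition open_intervals :: "real set set" where
  "open_intervals = range (\<lambda>(a, b). {a<..<b})"

definition open_boxes :: "'i set \<Rightarrow> ('i \<Rightarrow> real) set set" where
  "open_boxes J = {{f \<in> Pi\<^sub>E J (\<lambda>_. UNIV). \<forall>j\<in>J. f j \<in> {a j<..<b j}} | a b. True}"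

lemma open_box_in_open_boxes: "{f \<in> Pi\<^sub>E J (\<lambda>_. UNIV). \<forall>j\<in>J. f j \<in> {a j<..<b j}} \<in> open_boxes J"
  unfolding open_boxes_def by (intro CollectI exI) simp

lemma Int_stable_open_boxes: "Int_stable (open_boxes J)"
proof (rule Int_stableI)
  fix A B assume "A \<in> open_boxes J" "B \<in> open_boxes J"
  then obtain a b c d where
    "A = {f \<in> Pi\<^sub>E J (\<lambda>_. UNIV). \<forall>j\<in>J. f j \<in> {a j<..<b j}}"
    "B = {f \<in> Pi\<^sub>E J (\<lambda>_. UNIV). \<forall>j\<in>J. f j \<in> {c j<..<d j}}"
    by (auto simp: open_boxes_def)
  then have "A \<inter> B = {f \<in> Pi\<^sub>E J (\<lambda>_. UNIV). \<forall>j\<in>J. f j \<in> {max (a j) (c j)<..<min (b j) (d j)}}"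
    by (auto simp: greaterThanLessThan_iff)
  then show "A \<inter> B \<in> open_boxes J"
    by (simp only: open_box_in_open_boxes)
qed

lemma UN_open_cubes:
  assumes "finite J"
  shows "(\<Union>n. {f \<in> Pi\<^sub>E J (\<lambda>_. UNIV). \<forall>j\<in>J. f j \<in> {- real n<..<real n}}) = Pi\<^sub>E J (\<lambda>_. UNIV)"
proof safe
  fix f :: "_ \<Rightarrow> real" assume f: "f \<in> Pi\<^sub>E J (\<lambda>_. UNIV)"
  obtain n :: nat where n: "(\<Sum>j\<in>J. \<bar>f j\<bar>) < real n"
    using reals_Archimedean2 by blast
  have "f j \<in> {- real n<..<real n}" if "j \<in> J" for j
    using member_le_sum[of j J "\<lambda>j. \<bar>f j\<bar>"] that assms n by (auto simp: abs_le_iff)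
  then show "f \<in> (\<Union>n. {f \<in> Pi\<^sub>E J (\<lambda>_. UNIV). \<forall>j\<in>J. f j \<in> {- real n<..<real n}})"
    using f by blast
qed

lemma open_boxes_eq_product_generator:
  "open_boxes J =
    {{f \<in> Pi\<^sub>E J (\<lambda>_. UNIV). \<forall>j\<in>I. f j \<in> A j} | A I. I \<in> {J} \<and> A \<in> Pi I (\<lambda>_. open_intervals)}"
proof (intro antisym subsetI)
  fix X assume "X \<in> open_boxes J"
  then obtain a b where X: "X = {f \<in> Pi\<^sub>E J (\<lambda>_. UNIV). \<forall>j\<in>J. f j \<in> {a j<..<b j}}"
    by (auto simp: open_boxes_def)
  show "X \<in> {{f \<in> Pi\<^sub>E J (\<lambda>_. UNIV). \<forall>j\<in>I. f j \<in> A j} | A I. I \<in> {J} \<and> A \<in> Pi I (\<lambda>_. open_intervals)}"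
    unfolding X mem_Collect_eq
    by (intro exI[of _ "\<lambda>j. {a j<..<b j}"] exI[of _ J] conjI) (auto simp: open_intervals_def)
next
  fix X assume "X \<in> {{f \<in> Pi\<^sub>E J (\<lambda>_. UNIV). \<forall>j\<in>I. f j \<in> A j} | A I. I \<in> {J} \<and> A \<in> Pi I (\<lambda>_. open_intervals)}"
  then obtain A where A: "A \<in> Pi J (\<lambda>_. open_intervals)" and X: "X = {f \<in> Pi\<^sub>E J (\<lambda>_. UNIV). \<forall>j\<in>J. f j \<in> A j}"
    by blast
  have "\<forall>j\<in>J. \<exists>ab. A j = {fst ab<..<snd ab}"
    using A by (auto simp: open_intervals_def Pi_iff image_iff split_beta)
  then obtain a b where "\<forall>j\<in>J. A j = {a j<..<b j}"
    by (auto dest!: bchoice)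
  then have "X = {f \<in> Pi\<^sub>E J (\<lambda>_. UNIV). \<forall>j\<in>J. f j \<in> {a j<..<b j}}"
    unfolding X by auto
  then show "X \<in> open_boxes J"
    by (simp only: open_box_in_open_boxes)
qed

lemma sets_PiM_borel_eq_open_boxes:
  assumes J: "finite J"
  shows "sets (PiM J (\<lambda>_. borel)) = sigma_sets (Pi\<^sub>E J (\<lambda>_. UNIV)) (open_boxes J)"
proof -
  have borel: "borel = sigma UNIV open_intervals"
    using borel_eq_box[where 'a=real] by (simp add: open_intervals_def box_real)
  have "sets (PiM J (\<lambda>_. sigma UNIV open_intervals)) = sets (sigma (Pi\<^sub>E J (\<lambda>_. UNIV)) (open_boxes J))"
    unfolding open_boxes_eq_product_generator
  proof (rule sets_PiM_sigma)
    show "\<exists>S\<subseteq>open_intervals. countable S \<and> UNIV = \<Union> S" for i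
    proof (intro exI conjI)
      show "range (\<lambda>n::nat. {- real n<..<real n}) \<subseteq> open_intervals"
        by (auto simp: open_intervals_def)
      show "UNIV = \<Union> (range (\<lambda>n::nat. {- real n<..<real n}))"
      proof safe
        fix x :: real
        obtain n :: nat where "\<bar>x\<bar> < real n"
          using reals_Archimedean2 by blast
        then show "x \<in> \<Union> (range (\<lambda>n::nat. {- real n<..<real n}))"
          by (auto simp: abs_less_iff intro!: exI[of _ n])
      qed auto
    qed simp
  qed (use J in auto)
  moreover have "open_boxes J \<subseteq> Pow (Pi\<^sub>E J (\<lambda>_. UNIV))"
    by (auto simp: open_boxes_def)
  ultimately show ?thesis
    by (simp add: borel)
qed

lemma emeasure_distr_open_box:
  fixes a b :: "'i \<Rightarrow> real"
  assumes J: "finite J" and X: "\<And>j. j \<in> J \<Longrightarrow> X j \<in> borel_measurable M"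
  shows "emeasure (distr M (PiM J (\<lambda>_. borel)) (\<lambda>\<omega>. \<lambda>j\<in>J. X j \<omega>))
      {f \<in> Pi\<^sub>E J (\<lambda>_. UNIV). \<forall>j\<in>J. f j \<in> {a j<..<b j}} =
    emeasure M {\<omega>\<in>space M. \<forall>j\<in>J. X j \<omega> \<in> {a j<..<b j}}"
proof -
  have "{f \<in> Pi\<^sub>E J (\<lambda>_. UNIV). \<forall>j\<in>J. f j \<in> {a j<..<b j}} \<in> sets (PiM J (\<lambda>_. borel))"
    unfolding sets_PiM_borel_eq_open_boxes[OF J] by (rule sigma_sets.Basic[OF open_box_in_open_boxes])
  moreover have "(\<lambda>\<omega>. \<lambda>j\<in>J. X j \<omega>) -` {f \<in> Pi\<^sub>E J (\<lambda>_. UNIV). \<forall>j\<in>J. f j \<in> {a j<..<b j}} \<inter> space M =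
      {\<omega>\<in>space M. \<forall>j\<in>J. X j \<omega> \<in> {a j<..<b j}}"
    by auto
  ultimately show ?thesis
    using X by (simp add: emeasure_distr measurable_restrict)
qed

lemma distr_PiM_eq_if_joint_char_eq:
  assumes M: "prob_space M" and J: "finite J"
    and X1: "\<And>j. j \<in> J \<Longrightarrow> X1 j \<in> borel_measurable M"
    and X2: "\<And>j. j \<in> J \<Longrightarrow> X2 j \<in> borel_measurable M"
    and char: "joint_char M J X1 = joint_char M J X2"
  shows "distr M (PiM J (\<lambda>_. borel)) (\<lambda>\<omega>. \<lambda>j\<in>J. X1 j \<omega>) =
         distr M (PiM J (\<lambda>_. borel)) (\<lambda>\<omega>. \<lambda>j\<in>J. X2 j \<omega>)"
proof -
  interpret prob_space M by fact
  have meas: "(\<lambda>\<omega>. \<lambda>j\<in>J. X j \<omega>) \<in> M \<rightarrow>\<^sub>M PiM J (\<lambda>_. borel)"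
    if "\<And>j. j \<in> J \<Longrightarrow> X j \<in> borel_measurable M" for X
    using that by (rule measurable_restrict)
  show ?thesis
  proof (rule measure_eqI_generator_eq[OF Int_stable_open_boxes, where
        A="\<lambda>n. {f \<in> Pi\<^sub>E J (\<lambda>_. UNIV). \<forall>j\<in>J. f j \<in> {- real n<..<real n}}"])
    show "open_boxes J \<subseteq> Pow (Pi\<^sub>E J (\<lambda>_. UNIV))"
      by (auto simp: open_boxes_def)
    show "sets (distr M (PiM J (\<lambda>_. borel)) (\<lambda>\<omega>. \<lambda>j\<in>J. X1 j \<omega>)) =
        sigma_sets (Pi\<^sub>E J (\<lambda>_. UNIV)) (open_boxes J)"
      "sets (distr M (PiM J (\<lambda>_. borel)) (\<lambda>\<omega>. \<lambda>j\<in>J. X2 j \<omega>)) =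
        sigma_sets (Pi\<^sub>E J (\<lambda>_. UNIV)) (open_boxes J)"
      using J by (simp_all add: sets_PiM_borel_eq_open_boxes)
    fix X assume "X \<in> open_boxes J"
    then obtain a b where "X = {f \<in> Pi\<^sub>E J (\<lambda>_. UNIV). \<forall>j\<in>J. f j \<in> {a j<..<b j}}"
      by (auto simp: open_boxes_def)
    then show "emeasure (distr M (PiM J (\<lambda>_. borel)) (\<lambda>\<omega>. \<lambda>j\<in>J. X1 j \<omega>)) X =
        emeasure (distr M (PiM J (\<lambda>_. borel)) (\<lambda>\<omega>. \<lambda>j\<in>J. X2 j \<omega>)) X"
      using emeasure_box_eq_if_joint_char_eq[OF M J X1 X2 char]
      by (simp only: emeasure_distr_open_box[OF J X1] emeasure_distr_open_box[OF J X2])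
  next
    show "range (\<lambda>n. {f \<in> Pi\<^sub>E J (\<lambda>_. UNIV). \<forall>j\<in>J. f j \<in> {- real n<..<real n}}) \<subseteq> open_boxes J"
      by (intro image_subsetI open_box_in_open_boxes)
    show "(\<Union>n. {f \<in> Pi\<^sub>E J (\<lambda>_. UNIV). \<forall>j\<in>J. f j \<in> {- real n<..<real n}}) = Pi\<^sub>E J (\<lambda>_. UNIV)"
      using J by (rule UN_open_cubes)
    show "emeasure (distr M (PiM J (\<lambda>_. borel)) (\<lambda>\<omega>. \<lambda>j\<in>J. X1 j \<omega>)) A \<noteq> \<infinity>" for A
      using finite_measure.emeasure_finite[OF prob_space.finite_measure[OF prob_space_distr[OF meas[OF X1]]]]
      by simp
  qed
qed

lemma equal_law_if_joint_char_eq: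
  assumes M: "prob_space M"
    and X: "\<And>t. t \<in> T \<Longrightarrow> X t \<in> borel_measurable M"
    and Y: "\<And>t. t \<in> T \<Longrightarrow> Y t \<in> borel_measurable M"
    and char: "\<And>J. finite J \<Longrightarrow> J \<subseteq> T \<Longrightarrow> joint_char M J X = joint_char M J Y"
  shows "equal_law M T X Y"
proof -
  have cylinder: "emeasure (distr M (PiM T (\<lambda>_. borel)) (\<lambda>\<omega>. \<lambda>t\<in>T. Z t \<omega>)) (prod_emb T (\<lambda>_. borel) J (Pi\<^sub>E J A))
      = emeasure (distr M (PiM J (\<lambda>_. borel)) (\<lambda>\<omega>. \<lambda>j\<in>J. Z j \<omega>)) (Pi\<^sub>E J A)"
    if J: "finite J" "J \<subseteq> T" and A: "\<And>i. i \<in> J \<Longrightarrow> A i \<in> sets borel"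
      and Z: "\<And>t. t \<in> T \<Longrightarrow> Z t \<in> borel_measurable M" for J and A :: "real \<Rightarrow> real set" and Z
  proof -
    have "(\<lambda>\<omega>. \<lambda>t\<in>T. Z t \<omega>) \<in> M \<rightarrow>\<^sub>M PiM T (\<lambda>_. borel)" "(\<lambda>\<omega>. \<lambda>j\<in>J. Z j \<omega>) \<in> M \<rightarrow>\<^sub>M PiM J (\<lambda>_. borel)"
      using Z J by (auto intro!: measurable_restrict)
    moreover have "prod_emb T (\<lambda>_. borel) J (Pi\<^sub>E J A) \<in> sets (PiM T (\<lambda>_. borel))"
      "Pi\<^sub>E J A \<in> sets (PiM J (\<lambda>_. borel))"
      using J A by (auto intro!: sets_PiM_I sets_PiM_I_finite)
    moreover have "(\<lambda>\<omega>. \<lambda>t\<in>T. Z t \<omega>) -` prod_emb T (\<lambda>_. borel) J (Pi\<^sub>E J A) \<inter> space M =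
        (\<lambda>\<omega>. \<lambda>j\<in>J. Z j \<omega>) -` Pi\<^sub>E J A \<inter> space M"
      using J by (auto simp: prod_emb_def PiE_def Pi_def restrict_def extensional_def)
    ultimately show ?thesis
      by (simp add: emeasure_distr)
  qed
  show ?thesis
    unfolding equal_law_def
  proof (rule measure_eqI_PiM_infinite)
    show "finite_measure (distr M (PiM T (\<lambda>_. borel)) (\<lambda>\<omega>. \<lambda>t\<in>T. X t \<omega>))"
      using X by (intro prob_space.finite_measure prob_space.prob_space_distr[OF M] measurable_restrict)
  next
    fix J and A :: "real \<Rightarrow> real set" assume J: "finite J" "J \<subseteq> T" and A: "\<And>i. i \<in> J \<Longrightarrow> A i \<in> sets borel"
    have "\<And>j. j \<in> J \<Longrightarrow> X j \<in> borel_measurable M" "\<And>j. j \<in> J \<Longrightarrow> Y j \<in> borel_measurable M"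
      using X Y J by auto
    from distr_PiM_eq_if_joint_char_eq[OF M J(1) this char[OF J]]
    show "emeasure (distr M (PiM T (\<lambda>_. borel)) (\<lambda>\<omega>. \<lambda>t\<in>T. X t \<omega>)) (prod_emb T (\<lambda>_. borel) J (Pi\<^sub>E J A)) =
        emeasure (distr M (PiM T (\<lambda>_. borel)) (\<lambda>\<omega>. \<lambda>t\<in>T. Y t \<omega>)) (prod_emb T (\<lambda>_. borel) J (Pi\<^sub>E J A))"
      using cylinder[OF J A X] cylinder[OF J A Y] by simp
  qed simp_all
qed

definition lincomb :: "(real \<Rightarrow> real) \<Rightarrow> real list \<Rightarrow> real list \<Rightarrow> real" where
  "lincomb g ts cs = sum_list (map (\<lambda>(t, c). c * g t) (zip ts cs))"

lemma lincomb_conv_sum: "length ts = length cs \<Longrightarrow> lincomb g ts cs = (\<Sum>i<length ts. cs ! i * g (ts ! i))"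
  unfolding lincomb_def by (simp add: sum_list_sum_nth atLeast0LessThan)

lemma lincomb_append:
  "length ts = length cs \<Longrightarrow> lincomb g (ts @ ts') (cs @ cs') = lincomb g ts cs + lincomb g ts' cs'"
  unfolding lincomb_def by simp

lemma lincomb_map: "lincomb g (map f xs) (map c xs) = (\<Sum>x\<leftarrow>xs. c x * g (f x))"
  by (induction xs) (simp_all add: lincomb_def)

lemma lincomb_scale: "lincomb g ts (map ((*) a) cs) = a * lincomb g ts cs"
proof (induction ts arbitrary: cs)
  case (Cons t ts)
  then show ?case by (cases cs) (simp_all add: lincomb_def distrib_left)
qed (simp add: lincomb_def)

lemma lincomb_concat:
  assumes J: "finite J" and len: "\<And>t. length (TS t) = length (CS t)"
  shows "lincomb g (concat (map TS (sorted_list_of_set J)))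
      (concat (map (\<lambda>t. map ((*) (u t)) (CS t)) (sorted_list_of_set J))) =
    (\<Sum>t\<in>J. u t * lincomb g (TS t) (CS t))"
proof -
  have "lincomb g (concat (map TS xs)) (concat (map (\<lambda>t. map ((*) (u t)) (CS t)) xs)) =
      (\<Sum>t\<leftarrow>xs. u t * lincomb g (TS t) (CS t))" for xs
    by (induction xs) (simp_all add: lincomb_def[of g "[]"] lincomb_append len lincomb_scale)
  then show ?thesis
    using J by (simp add: sum_list_distinct_conv_sum_set)
qed

lemma is_fbm_prob_space: "is_fbm M H Z \<Longrightarrow> prob_space M"
  unfolding is_fbm_def by blast

lemma is_fbm_measurable: "is_fbm M H Z \<Longrightarrow> 0 \<le> t \<Longrightarrow> Z t \<in> borel_measurable M"
  unfolding is_fbm_def by blast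

lemma is_fbm_continuous: "is_fbm M H Z \<Longrightarrow> \<omega> \<in> space M \<Longrightarrow> continuous_on {0..} (\<lambda>t. Z t \<omega>)"
  unfolding is_fbm_def by blast

lemma is_fbm_char:
  "is_fbm M H Z \<Longrightarrow> length ts = length cs \<Longrightarrow> \<forall>t\<in>set ts. 0 \<le> t \<Longrightarrow>
    char (distr M borel (\<lambda>\<omega>. \<Sum>i<length ts. cs ! i * Z (ts ! i) \<omega>)) u =
    complex_of_real (exp (- (\<Sum>i<length ts. \<Sum>j<length ts.
      cs ! i * cs ! j * fbm_cov H (ts ! i) (ts ! j)) * u\<^sup>2 / 2))"
  unfolding is_fbm_def by blast

lemma lincomb_measurable:
  assumes "is_fbm M H Z" "length ts = length cs" "\<forall>t\<in>set ts. 0 \<le> t"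
  shows "(\<lambda>\<omega>. lincomb (\<lambda>s. Z s \<omega>) ts cs) \<in> borel_measurable M"
  unfolding lincomb_conv_sum[OF assms(2)]
  using assms(1,3) by (intro borel_measurable_sum borel_measurable_times borel_measurable_const
      is_fbm_measurable) auto

lemma fbm_integral_iexp_lincomb_eq:
  assumes Z1: "is_fbm M H Z1" and Z2: "is_fbm M H Z2"
    and ts: "length ts = length cs" "\<forall>t\<in>set ts. 0 \<le> t"
  shows "(CLINT \<omega>|M. iexp (lincomb (\<lambda>s. Z1 s \<omega>) ts cs)) = (CLINT \<omega>|M. iexp (lincomb (\<lambda>s. Z2 s \<omega>) ts cs))"
proof -
  have "(CLINT \<omega>|M. iexp (lincomb (\<lambda>s. Z s \<omega>) ts cs)) =
      char (distr M borel (\<lambda>\<omega>. \<Sum>i<length ts. cs ! i * Z (ts ! i) \<omega>)) 1"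
    if Z: "is_fbm M H Z" for Z
    using lincomb_measurable[OF Z ts]
    by (simp add: char_def integral_distr lincomb_conv_sum[OF ts(1)])
  then show ?thesis
    using is_fbm_char[OF Z1 ts, of 1] is_fbm_char[OF Z2 ts, of 1] Z1 Z2 by simp
qed

lemma tendsto_integral_iexp:
  assumes M: "finite_measure M" and Y: "\<And>n. Y n \<in> borel_measurable M"
    and lim: "\<And>\<omega>. \<omega> \<in> space M \<Longrightarrow> (\<lambda>n. Y n \<omega>) \<longlonglongrightarrow> L \<omega>"
  shows "(\<lambda>n. CLINT \<omega>|M. iexp (Y n \<omega>)) \<longlonglongrightarrow> (CLINT \<omega>|M. iexp (L \<omega>))"
proof (rule integral_dominated_convergence[where w="\<lambda>_. 1"])
  have [measurable]: "L \<in> borel_measurable M"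
    using lim Y by (rule borel_measurable_LIMSEQ_real)
  have [measurable]: "Y n \<in> borel_measurable M" for n
    by (rule Y)
  show "(\<lambda>\<omega>. iexp (L \<omega>)) \<in> borel_measurable M" "(\<lambda>\<omega>. iexp (Y n \<omega>)) \<in> borel_measurable M" for n
    by measurable
  show "integrable M (\<lambda>_. 1::real)"
    using M by (simp add: finite_measure.integrable_const)
  show "AE \<omega> in M. norm (iexp (Y n \<omega>)) \<le> 1" for n
    by (simp add: norm_exp_i_times)
  show "AE \<omega> in M. (\<lambda>n. iexp (Y n \<omega>)) \<longlonglongrightarrow> iexp (L \<omega>)"
    using lim by (intro AE_I2 tendsto_intros) auto
qed

lemma joint_char_eq_if_lincomb_tendsto:
  fixes J :: "real set"
  assumes Z1: "is_fbm M H Z1" and Z2: "is_fbm M H Z2" and J: "finite J"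
    and len: "\<And>n t. length (TS n t) = length (CS n t)"
    and nonneg: "\<And>n t. \<forall>s\<in>set (TS n t). 0 \<le> s"
    and X1: "\<And>t \<omega>. t \<in> J \<Longrightarrow> \<omega> \<in> space M \<Longrightarrow> (\<lambda>n. lincomb (\<lambda>s. Z1 s \<omega>) (TS n t) (CS n t)) \<longlonglongrightarrow> X1 t \<omega>"
    and X2: "\<And>t \<omega>. t \<in> J \<Longrightarrow> \<omega> \<in> space M \<Longrightarrow> (\<lambda>n. lincomb (\<lambda>s. Z2 s \<omega>) (TS n t) (CS n t)) \<longlonglongrightarrow> X2 t \<omega>"
  shows "joint_char M J X1 = joint_char M J X2"
proof
  fix u :: "real \<Rightarrow> real"
  have fin: "finite_measure M"
    using Z1 by (intro prob_space.finite_measure is_fbm_prob_space)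
  define TSJ where "TSJ n = concat (map (TS n) (sorted_list_of_set J))" for n
  define CSJ where "CSJ n = concat (map (\<lambda>t. map ((*) (u t)) (CS n t)) (sorted_list_of_set J))" for n
  have lenJ: "length (TSJ n) = length (CSJ n)" for n
    by (simp add: TSJ_def CSJ_def len length_concat comp_def)
  have nonnegJ: "\<forall>s\<in>set (TSJ n). 0 \<le> s" for n
    using nonneg by (auto simp: TSJ_def)
  have lim: "(\<lambda>n. CLINT \<omega>|M. iexp (lincomb (\<lambda>s. Z s \<omega>) (TSJ n) (CSJ n))) \<longlonglongrightarrow> joint_char M J X u"
    if Z: "is_fbm M H Z"
      and X: "\<And>t \<omega>. t \<in> J \<Longrightarrow> \<omega> \<in> space M \<Longrightarrow> (\<lambda>n. lincomb (\<lambda>s. Z s \<omega>) (TS n t) (CS n t)) \<longlonglongrightarrow> X t \<omega>"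
    for Z X
    unfolding joint_char_def
  proof (rule tendsto_integral_iexp[OF fin lincomb_measurable[OF Z lenJ nonnegJ]])
    fix \<omega> assume "\<omega> \<in> space M"
    then have "(\<lambda>n. \<Sum>t\<in>J. u t * lincomb (\<lambda>s. Z s \<omega>) (TS n t) (CS n t)) \<longlonglongrightarrow> (\<Sum>t\<in>J. u t * X t \<omega>)"
      by (intro tendsto_sum tendsto_mult_left X)
    then show "(\<lambda>n. lincomb (\<lambda>s. Z s \<omega>) (TSJ n) (CSJ n)) \<longlonglongrightarrow> (\<Sum>t\<in>J. u t * X t \<omega>)"
      by (simp add: TSJ_def CSJ_def lincomb_concat[OF J len])
  qed
  show "joint_char M J X1 u = joint_char M J X2 u"
    using LIMSEQ_unique[OF lim[OF Z1 X1]] lim[OF Z2 X2]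
      fbm_integral_iexp_lincomb_eq[OF Z1 Z2 lenJ nonnegJ] by simp
qed

lemma equal_law_fbm_functional:
  fixes T :: "real set"
  assumes Z1: "is_fbm M H Z1" and Z2: "is_fbm M H Z2"
    and len: "\<And>n t. length (TS n t) = length (CS n t)"
    and nonneg: "\<And>n t. \<forall>s\<in>set (TS n t). 0 \<le> s"
    and approx: "\<And>t g. t \<in> T \<Longrightarrow> continuous_on {0..} g \<Longrightarrow>
      (\<lambda>n. lincomb g (TS n t) (CS n t)) \<longlonglongrightarrow> \<Phi> t g"
    and X1: "\<And>t \<omega>. t \<in> T \<Longrightarrow> \<omega> \<in> space M \<Longrightarrow> X1 t \<omega> = \<Phi> t (\<lambda>s. Z1 s \<omega>)"
    and X2: "\<And>t \<omega>. t \<in> T \<Longrightarrow> \<omega> \<in> space M \<Longrightarrow> X2 t \<omega> = \<Phi> t (\<lambda>s. Z2 s \<omega>)"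
  shows "equal_law M T X1 X2"
proof -
  have tendsto: "(\<lambda>n. lincomb (\<lambda>s. Z s \<omega>) (TS n t) (CS n t)) \<longlonglongrightarrow> X t \<omega>"
    if Z: "is_fbm M H Z" and X: "\<And>t \<omega>. t \<in> T \<Longrightarrow> \<omega> \<in> space M \<Longrightarrow> X t \<omega> = \<Phi> t (\<lambda>s. Z s \<omega>)"
      and "t \<in> T" "\<omega> \<in> space M" for Z X t \<omega>
    using approx[OF \<open>t \<in> T\<close> is_fbm_continuous[OF Z \<open>\<omega> \<in> space M\<close>]] X[OF \<open>t \<in> T\<close> \<open>\<omega> \<in> space M\<close>]
    by simp
  have meas: "X t \<in> borel_measurable M"
    if Z: "is_fbm M H Z" and X: "\<And>t \<omega>. t \<in> T \<Longrightarrow> \<omega> \<in> space M \<Longrightarrow> X t \<omega> = \<Phi> t (\<lambda>s. Z s \<omega>)"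
      and "t \<in> T" for Z X t
    using tendsto[OF Z X \<open>t \<in> T\<close>] lincomb_measurable[OF Z len nonneg]
    by (rule borel_measurable_LIMSEQ_real)
  show ?thesis
  proof (rule equal_law_if_joint_char_eq[OF is_fbm_prob_space[OF Z1] meas[OF Z1 X1] meas[OF Z2 X2]])
    fix J assume J: "finite J" "J \<subseteq> T"
    show "joint_char M J X1 = joint_char M J X2"
      by (rule joint_char_eq_if_lincomb_tendsto[where TS = TS and CS = CS, OF Z1 Z2 J(1)])
         (use len nonneg J tendsto[OF Z1 X1] tendsto[OF Z2 X2] in auto)
  qed
qed

lemma abs_integral_diff_rectangle_le:
  fixes F :: "real \<Rightarrow> real"
  assumes cont: "continuous_on {a..b} F" and ab: "a \<le> b"
    and close: "\<And>x. x \<in> {a..b} \<Longrightarrow> \<bar>F x - F a\<bar> \<le> e" and e: "0 \<le> e"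
  shows "\<bar>integral {a..b} F - (b - a) * F a\<bar> \<le> (b - a) * e"
proof -
  have "(F has_integral integral {a..b} F) {a..b}"
    by (rule integrable_integral[OF integrable_continuous_interval[OF cont]])
  then have "((\<lambda>x. F x - F a) has_integral (integral {a..b} F - (b - a) * F a)) (cbox a b)"
    using has_integral_diff[OF _ has_integral_const_real[of "F a" a b]] ab by (simp add: content_real)
  from has_integral_bound[OF e this] close ab show ?thesis
    by (simp add: content_real mult.commute)
qed

lemma integral_eq_sum_cells:
  fixes F :: "real \<Rightarrow> real"
  assumes cont: "continuous_on {0..real m * h} F" and h: "0 \<le> h"
  shows "integral {0..real m * h} F = (\<Sum>k<m. integral {real k * h..real (Suc k) * h} F)"
  using cont
proof (induction m)
  case (Suc m)
  have "real m * h \<le> real (Suc m) * h"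
    using h by (simp add: mult_right_mono)
  moreover from this have "continuous_on {0..real m * h} F"
    using Suc.prems by (elim continuous_on_subset) auto
  ultimately show ?case
    using Suc h Henstock_Kurzweil_Integration.integral_combine[of 0 "real m * h" "real (Suc m) * h" F]
      integrable_continuous_interval[OF Suc.prems]
    by simp
qed simp

lemma Riemann_sum_error_le:
  fixes F :: "real \<Rightarrow> real"
  assumes cont: "continuous_on {0..t} F" and N: "0 < N" and h: "h = t / real N" and t: "0 \<le> t"
    and e: "0 \<le> e" and close: "\<And>x y. x \<in> {0..t} \<Longrightarrow> y \<in> {0..t} \<Longrightarrow> \<bar>x - y\<bar> \<le> h \<Longrightarrow> \<bar>F x - F y\<bar> \<le> e"
  shows "\<bar>(\<Sum>k<N. h * F (real k * h)) - integral {0..t} F\<bar> \<le> t * e"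
proof -
  have h0: "0 \<le> h" and Nh: "real N * h = t"
    using N t by (simp_all add: h)
  have cell: "\<bar>integral {real k * h..real (Suc k) * h} F - h * F (real k * h)\<bar> \<le> h * e"
    if "k < N" for k
  proof -
    have "real (Suc k) * h \<le> t"
      using that h0 Nh mult_right_mono[of "real (Suc k)" "real N" h] by simp
    then have sub: "{real k * h..real (Suc k) * h} \<subseteq> {0..t}"
      using h0 by auto
    have hh: "real (Suc k) * h - real k * h = h"
      by (simp add: algebra_simps)
    have "\<bar>F x - F (real k * h)\<bar> \<le> e" if "x \<in> {real k * h..real (Suc k) * h}" for x
    proof (rule close)
      show "x \<in> {0..t}" "real k * h \<in> {0..t}"
        using that sub h0 by (auto intro: order_trans[OF mult_nonneg_nonneg[OF of_nat_0_le_iff h0]])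
      show "\<bar>x - real k * h\<bar> \<le> h"
        using that by (simp add: algebra_simps)
    qed
    then have "\<bar>integral {real k * h..real (Suc k) * h} F - (real (Suc k) * h - real k * h) * F (real k * h)\<bar>
        \<le> (real (Suc k) * h - real k * h) * e"
      using continuous_on_subset[OF cont sub] h0 e
      by (intro abs_integral_diff_rectangle_le) (auto simp: mult_right_mono)
    then show ?thesis
      by (simp only: hh)
  qed
  have "integral {0..t} F = (\<Sum>k<N. integral {real k * h..real (Suc k) * h} F)"
    using integral_eq_sum_cells[of N h F] cont h0 by (simp add: Nh)
  then have "\<bar>(\<Sum>k<N. h * F (real k * h)) - integral {0..t} F\<bar> =
      \<bar>\<Sum>k<N. integral {real k * h..real (Suc k) * h} F - h * F (real k * h)\<bar>"
    by (simp add: sum_subtractf abs_minus_commute)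
  also have "\<dots> \<le> (\<Sum>k<N. \<bar>integral {real k * h..real (Suc k) * h} F - h * F (real k * h)\<bar>)"
    by (rule sum_abs)
  also have "\<dots> \<le> (\<Sum>k<N. h * e)"
    using cell by (intro sum_mono) auto
  also have "\<dots> = t * e"
    using Nh by simp
  finally show ?thesis .
qed

lemma Riemann_sums_tendsto_integral:
  fixes F :: "real \<Rightarrow> real"
  assumes cont: "continuous_on {0..t} F" and t: "0 \<le> t"
  shows "(\<lambda>n. \<Sum>k<Suc n. t / real (Suc n) * F (real k * (t / real (Suc n)))) \<longlonglongrightarrow> integral {0..t} F"
proof (rule LIMSEQ_I)
  fix r :: real assume r: "0 < r"
  define e where "e = r / (2 * (t + 1))"
  have e: "0 < e"
    unfolding e_def using r t by (intro divide_pos_pos) auto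
  have "t * e \<le> (t + 1) * e"
    using e by simp
  also have "(t + 1) * e = r / 2"
    using t by (simp add: e_def field_simps)
  finally have te: "t * e < r"
    using r by simp
  have "uniformly_continuous_on {0..t} F"
    by (rule compact_uniformly_continuous[OF cont compact_Icc])
  then obtain d where d: "0 < d"
    and close: "\<And>x y. x \<in> {0..t} \<Longrightarrow> y \<in> {0..t} \<Longrightarrow> dist x y < d \<Longrightarrow> dist (F x) (F y) < e"
    unfolding uniformly_continuous_on_def using e by metis
  obtain N :: nat where N: "t / d < real N"
    using reals_Archimedean2 by blast
  have "\<bar>(\<Sum>k<Suc n. t / real (Suc n) * F (real k * (t / real (Suc n)))) - integral {0..t} F\<bar> < r"
    if "N \<le> n" for n
  proof -
    have "t / d < real (Suc n)"
      using N that by linarith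
    then have "t / real (Suc n) < d"
      using d by (simp add: field_simps)
    then have "\<bar>F x - F y\<bar> \<le> e" if "x \<in> {0..t}" "y \<in> {0..t}" "\<bar>x - y\<bar> \<le> t / real (Suc n)" for x y
      using close[OF that(1,2)] that(3) by (simp add: dist_real_def)
    then have "\<bar>(\<Sum>k<Suc n. t / real (Suc n) * F (real k * (t / real (Suc n)))) - integral {0..t} F\<bar> \<le> t * e"
      using e by (intro Riemann_sum_error_le[OF cont _ refl t]) auto
    then show ?thesis
      using te by linarith
  qed
  then show "\<exists>N. \<forall>n\<ge>N. norm ((\<Sum>k<Suc n. t / real (Suc n) * F (real k * (t / real (Suc n)))) - integral {0..t} F) < r"
    by auto
qed

definition Y_path :: "real \<Rightarrow> real \<Rightarrow> (real \<Rightarrow> real) \<Rightarrow> real \<Rightarrow> real" where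
  "Y_path H a g t = exp (- a * t) * g (time_change H a t) - g (time_change H a 0)
     + a * integral {0..t} (\<lambda>s. exp (- a * s) * g (time_change H a s))"

lemma Yproc_eq_Y_path: "Yproc H Z a t \<omega> = Y_path H a (\<lambda>s. Z s \<omega>) t"
  by (simp add: Yproc_def Y_path_def)

lemma time_change_pos: "0 < H \<Longrightarrow> 0 < a \<Longrightarrow> 0 < time_change H a s"
  unfolding time_change_def by simp

lemma continuous_on_time_change: "0 < H \<Longrightarrow> 0 < a \<Longrightarrow> continuous_on S (time_change H a)"
  unfolding time_change_def by (intro continuous_intros) auto

lemma continuous_on_comp_time_change:
  assumes "0 < H" "0 < a" "continuous_on {0..} g"
  shows "continuous_on S (\<lambda>s. g (time_change H a s))"
  using assms
  by (intro continuous_on_compose2[OF assms(3) continuous_on_time_change])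
     (auto simp: less_imp_le time_change_pos)

definition Y_nodes :: "real \<Rightarrow> real \<Rightarrow> nat \<Rightarrow> real \<Rightarrow> real list" where
  "Y_nodes H a n t = [time_change H a t, time_change H a 0] @
     map (\<lambda>k. time_change H a (real k * (t / real (Suc n)))) [0..<Suc n]"

definition Y_weights :: "real \<Rightarrow> nat \<Rightarrow> real \<Rightarrow> real list" where
  "Y_weights a n t = [exp (- a * t), -1] @
     map (\<lambda>k. a * (t / real (Suc n) * exp (- a * (real k * (t / real (Suc n)))))) [0..<Suc n]"

lemma length_Y_nodes: "length (Y_nodes H a n t) = length (Y_weights a n t)"
  by (simp add: Y_nodes_def Y_weights_def)

lemma Y_nodes_nonneg: "0 < H \<Longrightarrow> 0 < a \<Longrightarrow> \<forall>s\<in>set (Y_nodes H a n t). 0 \<le> s"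
  by (auto simp: Y_nodes_def less_imp_le time_change_pos)

lemma lincomb_Y_nodes:
  "lincomb g (Y_nodes H a n t) (Y_weights a n t) =
    exp (- a * t) * g (time_change H a t) - g (time_change H a 0) +
    a * (\<Sum>k<Suc n. t / real (Suc n) *
      (exp (- a * (real k * (t / real (Suc n)))) * g (time_change H a (real k * (t / real (Suc n))))))"
proof -
  have "lincomb g (Y_nodes H a n t) (Y_weights a n t) =
      lincomb g [time_change H a t, time_change H a 0] [exp (- a * t), -1] +
      lincomb g (map (\<lambda>k. time_change H a (real k * (t / real (Suc n)))) [0..<Suc n])
        (map (\<lambda>k. a * (t / real (Suc n) * exp (- a * (real k * (t / real (Suc n)))))) [0..<Suc n])"
    unfolding Y_nodes_def Y_weights_def by (rule lincomb_append) simp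
  also have "lincomb g [time_change H a t, time_change H a 0] [exp (- a * t), -1] =
      exp (- a * t) * g (time_change H a t) - g (time_change H a 0)"
    by (simp add: lincomb_def)
  also have "lincomb g (map (\<lambda>k. time_change H a (real k * (t / real (Suc n)))) [0..<Suc n])
      (map (\<lambda>k. a * (t / real (Suc n) * exp (- a * (real k * (t / real (Suc n)))))) [0..<Suc n]) =
    (\<Sum>k<Suc n. a * (t / real (Suc n) * exp (- a * (real k * (t / real (Suc n))))) *
      g (time_change H a (real k * (t / real (Suc n)))))"
    by (simp only: lincomb_map interv_sum_list_conv_sum_set_nat set_upt atLeast0LessThan)
  finally show ?thesis
    by (simp only: sum_distrib_left mult.assoc)
qed

lemma lincomb_Y_nodes_tendsto:
  assumes H: "0 < H" and a: "0 < a" and t: "0 \<le> t" and g: "continuous_on {0..} g"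
  shows "(\<lambda>n. lincomb g (Y_nodes H a n t) (Y_weights a n t)) \<longlonglongrightarrow> Y_path H a g t"
proof -
  have "continuous_on {0..t} (\<lambda>s. exp (- a * s) * g (time_change H a s))"
    using continuous_on_comp_time_change[OF H a g] by (intro continuous_intros)
  from Riemann_sums_tendsto_integral[OF this t]
  show ?thesis
    unfolding lincomb_Y_nodes Y_path_def by (intro tendsto_intros)
qed

lemma equal_law_Yproc_fbm:
  assumes "is_fbm M H Z1" "is_fbm M H Z2" "0 < H" "0 < a"
  shows "equal_law M {0..} (Yproc H Z1 a) (Yproc H Z2 a)"
  using assms
  by (intro equal_law_fbm_functional[where TS = "\<lambda>n t. Y_nodes H a n t" and CS = "\<lambda>n t. Y_weights a n t"
        and \<Phi> = "\<lambda>t g. Y_path H a g t"])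
     (auto simp: length_Y_nodes Y_nodes_nonneg lincomb_Y_nodes_tendsto Yproc_eq_Y_path)

lemma fbm_cov_scale:
  assumes c: "0 < c" and "0 \<le> x" "0 \<le> y"
  shows "c powr (- H) * c powr (- H) * fbm_cov H (c * x) (c * y) = fbm_cov H x y"
proof -
  have "\<bar>c * x - c * y\<bar> = c * \<bar>x - y\<bar>"
    using c by (simp add: abs_mult right_diff_distrib[symmetric])
  then have "fbm_cov H (c * x) (c * y) = c powr (2 * H) * fbm_cov H x y"
    unfolding fbm_cov_def by (simp add: powr_mult algebra_simps)
  moreover have "c powr (- H) * c powr (- H) * c powr (2 * H) = 1"
    using c by (simp add: powr_add[symmetric])
  ultimately show ?thesis
    by (metis mult.assoc mult_1)
qed

lemma fbm_cov_form_scale: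
  assumes c: "0 < c" and len: "length ts = length cs" and nonneg: "\<forall>t\<in>set ts. 0 \<le> t"
  shows "(\<Sum>i<length ts. \<Sum>j<length ts. map ((*) (c powr (- H))) cs ! i * map ((*) (c powr (- H))) cs ! j *
      fbm_cov H (map ((*) c) ts ! i) (map ((*) c) ts ! j)) =
    (\<Sum>i<length ts. \<Sum>j<length ts. cs ! i * cs ! j * fbm_cov H (ts ! i) (ts ! j))"
proof (intro sum.cong refl)
  fix i j assume "i \<in> {..<length ts}" "j \<in> {..<length ts}"
  then have "0 \<le> ts ! i" "0 \<le> ts ! j" "i < length cs" "j < length cs"
    using nonneg len by auto
  then show "map ((*) (c powr (- H))) cs ! i * map ((*) (c powr (- H))) cs ! j *
      fbm_cov H (map ((*) c) ts ! i) (map ((*) c) ts ! j) = cs ! i * cs ! j * fbm_cov H (ts ! i) (ts ! j)"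
    using fbm_cov_scale[OF c, of "ts ! i" "ts ! j" H] \<open>i \<in> _\<close> \<open>j \<in> _\<close>
    by (simp add: mult_ac)
qed

lemma is_fbm_rescale:
  assumes Z: "is_fbm M H Z" and c: "0 < c"
  shows "is_fbm M H (\<lambda>t \<omega>. c powr (- H) * Z (c * t) \<omega>)"
  unfolding is_fbm_def
proof (intro conjI allI impI ballI)
  show "prob_space M"
    using Z by (rule is_fbm_prob_space)
  show "(\<lambda>\<omega>. c powr (- H) * Z (c * t) \<omega>) \<in> borel_measurable M" if "0 \<le> t" for t
    using that c by (intro borel_measurable_times borel_measurable_const is_fbm_measurable[OF Z]) simp
  show "continuous_on {0..} (\<lambda>t. c powr (- H) * Z (c * t) \<omega>)" if "\<omega> \<in> space M" for \<omega>
    using c by (intro continuous_intros continuous_on_compose2[OF is_fbm_continuous[OF Z that]]) auto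
  fix ts cs :: "real list" and u :: real
  assume "length ts = length cs \<and> (\<forall>t\<in>set ts. 0 \<le> t)"
  then have len: "length ts = length cs" and nonneg: "\<forall>t\<in>set ts. 0 \<le> t"
    by auto
  define ts' where "ts' = map ((*) c) ts"
  define cs' where "cs' = map ((*) (c powr (- H))) cs"
  have len': "length ts' = length cs'" and nonneg': "\<forall>t\<in>set ts'. 0 \<le> t"
    using len nonneg c by (auto simp: ts'_def cs'_def)
  have "(\<lambda>\<omega>. \<Sum>i<length ts. cs ! i * (c powr (- H) * Z (c * ts ! i) \<omega>)) =
      (\<lambda>\<omega>. \<Sum>i<length ts'. cs' ! i * Z (ts' ! i) \<omega>)"
    using len by (intro ext sum.cong) (auto simp: ts'_def cs'_def)
  moreover have "(\<Sum>i<length ts'. \<Sum>j<length ts'. cs' ! i * cs' ! j * fbm_cov H (ts' ! i) (ts' ! j)) =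
      (\<Sum>i<length ts. \<Sum>j<length ts. cs ! i * cs ! j * fbm_cov H (ts ! i) (ts ! j))"
    unfolding ts'_def cs'_def length_map by (rule fbm_cov_form_scale[OF c len nonneg])
  ultimately show "char (distr M borel (\<lambda>\<omega>. \<Sum>i<length ts. cs ! i * (c powr (- H) * Z (c * ts ! i) \<omega>))) u =
      complex_of_real (exp (- (\<Sum>i<length ts. \<Sum>j<length ts.
        cs ! i * cs ! j * fbm_cov H (ts ! i) (ts ! j)) * u\<^sup>2 / 2))"
    using is_fbm_char[OF Z len' nonneg'] by simp
qed

lemma Y_path_scale:
  assumes H: "0 < H" and A: "0 < A" and g: "continuous_on {0..} g" and t: "0 \<le> t"
  shows "A powr H * Y_path H A g (t / A) = Y_path H 1 (\<lambda>x. (1 / A) powr (- H) * g (1 / A * x)) t"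
proof -
  have tc: "time_change H A (s / A) = time_change H 1 s / A" for s
    unfolding time_change_def using A by simp
  define f where "f s = exp (- s) * g (time_change H 1 s / A)" for s
  have "(\<lambda>x. x / A) ` {0..t} = {0..t / A}"
    using A by (auto simp: image_iff field_simps intro!: bexI[of _ "_ * A"])
  then have "integral {0..t / A} (\<lambda>s. f (A * s)) = integral {0..t} f / A"
    using integral_stretch_real[of A 0 t f] A by simp
  moreover have "(\<lambda>s. exp (- A * s) * g (time_change H A s)) = (\<lambda>s. f (A * s))"
    using tc[of "A * _"] A by (simp add: f_def)
  ultimately have "A * integral {0..t / A} (\<lambda>s. exp (- A * s) * g (time_change H A s)) = integral {0..t} f"
    using A by simp
  moreover have "(1 / A) powr (- H) = A powr H"
    using A by (simp add: powr_minus_divide powr_divide)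
  moreover have "integral {0..t} (\<lambda>s. exp (- s) * (A powr H * g (time_change H 1 s / A))) =
      A powr H * integral {0..t} f"
    using integral_mult_right[of "{0..t}" "A powr H" f] by (simp add: f_def mult.left_commute)
  ultimately show ?thesis
    using tc[of t] tc[of 0] A by (simp add: Y_path_def f_def algebra_simps)
qed

lemma Y_path_shift:
  assumes H: "0 < H" and a: "0 < a" and g: "continuous_on {0..} g" and t: "0 \<le> t" and h: "0 \<le> h"
  shows "Y_path H a g (t + h) - Y_path H a g h =
    Y_path H a (\<lambda>x. exp (a * h / H) powr (- H) * g (exp (a * h / H) * x)) t"
proof -
  define c where "c = exp (a * h / H)"
  have k: "c powr (- H) = exp (- a * h)"
    using H by (simp add: c_def powr_def)
  have tc: "time_change H a (h + s) = c * time_change H a s" for s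
    unfolding time_change_def c_def by (simp add: distrib_left add_divide_distrib exp_add)
  define F where "F = (\<lambda>s. exp (- a * s) * g (time_change H a s))"
  have "F integrable_on {0..t + h}"
    unfolding F_def
    using continuous_on_comp_time_change[OF H a g]
    by (intro integrable_continuous_interval continuous_intros)
  then have "integral {0..t + h} F - integral {0..h} F = integral {h..t + h} F"
    using Henstock_Kurzweil_Integration.integral_combine[of 0 h "t + h" F] t h by simp
  also have "\<dots> = integral {0..t} (F \<circ> (+) h)"
    using integral_shift_Icc_real[of 0 t F h] by (simp add: add.commute)
  also have "F \<circ> (+) h = (\<lambda>s. exp (- a * s) * (c powr (- H) * g (c * time_change H a s)))"
  proof
    fix s
    have "exp (- a * (h + s)) = exp (- a * s) * exp (- a * h)"
      by (simp add: distrib_left exp_add[symmetric] algebra_simps)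
    then show "(F \<circ> (+) h) s = exp (- a * s) * (c powr (- H) * g (c * time_change H a s))"
      by (simp add: F_def tc k)
  qed
  finally have "integral {0..t + h} F - integral {0..h} F =
      integral {0..t} (\<lambda>s. exp (- a * s) * (c powr (- H) * g (c * time_change H a s)))" .
  moreover have "exp (- a * (t + h)) = exp (- a * t) * exp (- a * h)"
    by (simp add: distrib_left exp_add[symmetric])
  ultimately show ?thesis
    using tc[of 0] tc[of t] unfolding Y_path_def F_def[symmetric]
    by (simp add: k add.commute algebra_simps c_def[symmetric])
qed

lemma equal_law_cong:
  assumes "\<And>t \<omega>. t \<in> T \<Longrightarrow> \<omega> \<in> space M \<Longrightarrow> X t \<omega> = X' t \<omega>"
    and "\<And>t \<omega>. t \<in> T \<Longrightarrow> \<omega> \<in> space M \<Longrightarrow> Y t \<omega> = Y' t \<omega>"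
  shows "equal_law M T X Y \<longleftrightarrow> equal_law M T X' Y'"
proof -
  have "distr M (PiM T (\<lambda>_. borel)) (\<lambda>\<omega>. \<lambda>t\<in>T. X t \<omega>) = distr M (PiM T (\<lambda>_. borel)) (\<lambda>\<omega>. \<lambda>t\<in>T. X' t \<omega>)"
    "distr M (PiM T (\<lambda>_. borel)) (\<lambda>\<omega>. \<lambda>t\<in>T. Y t \<omega>) = distr M (PiM T (\<lambda>_. borel)) (\<lambda>\<omega>. \<lambda>t\<in>T. Y' t \<omega>)"
    using assms by (auto intro!: distr_cong simp: restrict_def)
  then show ?thesis
    by (simp add: equal_law_def)
qed

lemma equal_law_Yproc_scaling:
  assumes H: "0 < H" and Z: "is_fbm M H Z" and a: "0 < a"
  shows "equal_law M {0..} (\<lambda>t \<omega>. a powr H * Yproc H Z a (t / a) \<omega>) (Yproc H Z 1)"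
proof -
  let ?Z' = "\<lambda>x \<omega>. (1 / a) powr (- H) * Z ((1 / a) * x) \<omega>"
  have "is_fbm M H ?Z'"
    using a by (intro is_fbm_rescale[OF Z]) simp
  then have "equal_law M {0..} (Yproc H ?Z' 1) (Yproc H Z 1)"
    using Z H by (intro equal_law_Yproc_fbm) simp_all
  moreover have "a powr H * Yproc H Z a (t / a) \<omega> = Yproc H ?Z' 1 t \<omega>" if "t \<in> {0..}" "\<omega> \<in> space M" for t \<omega>
    using Y_path_scale[OF H a is_fbm_continuous[OF Z that(2)], of t] that(1)
    by (simp add: Yproc_eq_Y_path)
  ultimately show ?thesis
    by (subst equal_law_cong) auto
qed

lemma stationary_increments_Yproc:
  assumes H: "0 < H" and Z: "is_fbm M H Z" and a: "0 < a"
  shows "stationary_increments M (Yproc H Z a)"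
  unfolding stationary_increments_def
proof (intro allI impI)
  fix h :: real assume h: "0 \<le> h"
  let ?Z' = "\<lambda>x \<omega>. exp (a * h / H) powr (- H) * Z (exp (a * h / H) * x) \<omega>"
  have "is_fbm M H ?Z'"
    by (intro is_fbm_rescale[OF Z]) simp
  then have "equal_law M {0..} (Yproc H ?Z' a) (Yproc H Z a)"
    using Z H a by (rule equal_law_Yproc_fbm)
  moreover have "Yproc H Z a (t + h) \<omega> - Yproc H Z a h \<omega> = Yproc H ?Z' a t \<omega>"
    if "t \<in> {0..}" "\<omega> \<in> space M" for t \<omega>
    using Y_path_shift[OF H a is_fbm_continuous[OF Z that(2)] _ h, of t] that(1)
    by (simp add: Yproc_eq_Y_path)
  moreover have "Yproc H Z a t \<omega> - Yproc H Z a 0 \<omega> = Yproc H Z a t \<omega>" for t \<omega>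
    by (simp add: Yproc_def)
  ultimately show "equal_law M {0..} (\<lambda>t \<omega>. Yproc H Z a (t + h) \<omega> - Yproc H Z a h \<omega>)
      (\<lambda>t \<omega>. Yproc H Z a t \<omega> - Yproc H Z a 0 \<omega>)"
    by (subst equal_law_cong) auto
qed

theorem proposition3p2:
  fixes M :: "'w measure" and H :: real and Z :: "real \<Rightarrow> 'w \<Rightarrow> real"
  assumes "0 < H" "H < 1"
    and "is_fbm M H Z"
  shows "\<forall>\<alpha>>0.
           equal_law M {0..} (\<lambda>t \<omega>. \<alpha> powr H * Yproc H Z \<alpha> (t / \<alpha>) \<omega>) (Yproc H Z 1)
         \<and> stationary_increments M (Yproc H Z \<alpha>)"
  using equal_law_Yproc_scaling[OF assms(1,3)] stationary_increments_Yproc[OF assms(1,3)] by blast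

end
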